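(* Let $G=\mathbb{Z}_2\times\mathbb{Z}_4$ and let $\theta_1,\theta_2$ be normalised orthomorphisms of $G$ with $|A_{44}\cap A'_{44}|=2$. Then $\theta_1$ and $\theta_2$ are not orthogonal.
   Context: $G$ is written multiplicatively with identity $e$; $o(g)$ is the order of $g$. A normalised orthomorphism of $G$ is a bijection $\theta\colon G\to G$ with $\theta(e)=e$ such that $x\mapsto x^{-1}\theta(x)$ is a bijection of $G$. Two orthomorphisms are orthogonal if $x\mapsto\theta_1(x)^{-1}\theta_2(x)$ is a bijection of $G$. $A_{44}=\{x: o(x)=4, o(\theta_1(x))=4\}$ and $A'_{44}=\{x: o(x)=4, o(\theta_2(x))=4\}$. *)

theory Defs
  imports Main "HOL-Library.Numeral_Type" "HOL-Library.Product_Plus"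
begin

text \<open>Groups are written additively (type class group_add); the identity is 0,
  x^{-1} y becomes - x + y.  The order o(x) is the least positive n with n x = 0.\<close>

definition elem_order :: "'a::group_add \<Rightarrow> nat" where
  "elem_order x = (LEAST n::nat. 0 < n \<and> (((+) x) ^^ n) 0 = 0)"

definition normalised_orthomorphism :: "('a::group_add \<Rightarrow> 'a) \<Rightarrow> bool" where
  "normalised_orthomorphism \<theta> \<longleftrightarrow> bij \<theta> \<and> \<theta> 0 = 0 \<and> bij (\<lambda>x. - x + \<theta> x)"

definition orthogonal_orth :: "('a::group_add \<Rightarrow> 'a) \<Rightarrow> ('a \<Rightarrow> 'a) \<Rightarrow> bool" where
  "orthogonal_orth \<theta>1 \<theta>2 \<longleftrightarrow> bij (\<lambda>x. - \<theta>1 x + \<theta>2 x)"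

definition A44 :: "('a::group_add \<Rightarrow> 'a) \<Rightarrow> 'a set" where
  "A44 \<theta> = {x. elem_order x = 4 \<and> elem_order (\<theta> x) = 4}"

end

theory Submission
  imports Defs
begin

text \<open>In \<open>\<int>\<^sub>2 \<times> \<int>\<^sub>4\<close> the elements of order 4 are exactly those outside the index-2
  subgroup \<open>{x. 2x = 0}\<close>, so \<open>R x \<equiv> o(x) = 4\<close> satisfies \<open>R (-x + y) \<longleftrightarrow> R x \<noteq> R y\<close>.
  Hence whenever \<open>-f x + g x\<close> is a bijection, \<open>R \<circ> f\<close> and \<open>R \<circ> g\<close> disagree at exactly
  4 of the 8 points. If \<open>\<theta>\<^sub>1\<close>, \<open>\<theta>\<^sub>2\<close> were orthogonal this would hold for each of the pairs
  \<open>(id, \<theta>\<^sub>1)\<close>, \<open>(id, \<theta>\<^sub>2)\<close>, \<open>(\<theta>\<^sub>1, \<theta>\<^sub>2)\<close>. Among three Boolean values, either all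
  agree or exactly two of the three pairs disagree, so the points where \<open>R\<close>, \<open>R \<circ> \<theta>\<^sub>1\<close>,
  \<open>R \<circ> \<theta>\<^sub>2\<close> all agree number \<open>8 - 12/2 = 2\<close>. But these include the two points of
  \<open>A\<^sub>4\<^sub>4 \<inter> A'\<^sub>4\<^sub>4\<close> and also \<open>0\<close>.\<close>

lemma card_Collect_comp_bij:
  assumes "bij f"
  shows "card {x. P (f x)} = card {x. P x}"
proof -
  have "{x. P (f x)} = f -` {x. P x}" by auto
  moreover have "card (f -` {x. P x}) = card {x. P x}"
    using assms by (intro card_vimage_inj) (auto simp: bij_def)
  ultimately show ?thesis by simp
qed

lemma card_disagree_eq_card:
  fixes f g :: "'a::group_add \<Rightarrow> 'a"
  assumes character: "\<And>x y. R (- x + y) \<longleftrightarrow> R x \<noteq> R y"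
    and "bij (\<lambda>x. - f x + g x)"
  shows "card {x. R (f x) \<noteq> R (g x)} = card {x. R x}"
  using card_Collect_comp_bij[OF assms(2), of R] by (simp add: character)

lemma card_pairwise_disagree:
  fixes r p q :: "'a::finite \<Rightarrow> bool"
  shows "card {x. r x \<noteq> p x} + card {x. r x \<noteq> q x} + card {x. p x \<noteq> q x}
           + 2 * card {x. r x = p x \<and> p x = q x} = 2 * CARD('a)"
proof -
  have card_as_sum: "card {x. P x} = (\<Sum>x\<in>UNIV. if P x then 1 else 0)" for P :: "'a \<Rightarrow> bool"
    by (simp add: sum.If_cases)
  have pointwise: "(if r x \<noteq> p x then 1 else 0) + (if r x \<noteq> q x then 1 else 0)
      + (if p x \<noteq> q x then 1 else 0) + 2 * (if r x = p x \<and> p x = q x then 1 else 0) = (2::nat)"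
    for x by auto
  show ?thesis
    unfolding card_as_sum sum_distrib_left sum.distrib[symmetric] pointwise by simp
qed

lemma exhaust_2: fixes x :: 2 shows "x = 0 \<or> x = 1"
proof (induct x)
  case (of_int z)
  then have "z = 0 \<or> z = 1" by fastforce
  then show ?case by auto
qed

lemma exhaust_4: fixes x :: 4 shows "x = 0 \<or> x = 1 \<or> x = 2 \<or> x = 3"
proof (induct x)
  case (of_int z)
  then have "z = 0 \<or> z = 1 \<or> z = 2 \<or> z = 3" by fastforce
  then show ?case by auto
qed

lemma double_cases: "(x::2 \<times> 4) + x = 0 \<or> x + x = (0, 2)"
proof -
  obtain a b where "x = (a, b)" by fastforce
  then show ?thesis using exhaust_2[of a] exhaust_4[of b] by (auto simp: zero_prod_def)
qed

lemma quadruple_eq_0: "(x::2 \<times> 4) + x + x + x = 0"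
proof -
  obtain a b where "x = (a, b)" by fastforce
  then show ?thesis using exhaust_2[of a] exhaust_4[of b] by (auto simp: zero_prod_def)
qed

lemma elem_order_eq_4_iff: "elem_order (x::2 \<times> 4) = 4 \<longleftrightarrow> x + x \<noteq> 0"
proof
  assume "elem_order x = 4"
  show "x + x \<noteq> 0"
  proof
    assume "x + x = 0"
    then have "((+) x ^^ 2) 0 = 0" by (simp add: numeral_eq_Suc)
    then have "elem_order x \<le> 2" unfolding elem_order_def by (intro Least_le) simp
    with \<open>elem_order x = 4\<close> show False by simp
  qed
next
  assume double: "x + x \<noteq> 0"
  then have "x \<noteq> 0" by auto
  moreover have "x + x + x \<noteq> 0"
    using quadruple_eq_0[of x] \<open>x \<noteq> 0\<close> by (metis add.assoc add.right_neutral)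
  ultimately have "4 \<le> n" if "((+) x ^^ n) 0 = 0" "0 < n" for n
    using that double by (cases "n \<in> {1, 2, 3}") (auto simp: numeral_eq_Suc add.assoc)
  then show "elem_order x = 4"
    unfolding elem_order_def
    by (intro Least_equality) (auto simp: numeral_eq_Suc quadruple_eq_0[simplified add.assoc])
qed

lemma elem_order_4_diff_iff:
  "elem_order (- x + y :: 2 \<times> 4) = 4 \<longleftrightarrow> (elem_order x = 4) \<noteq> (elem_order y = 4)"
proof -
  have double_diff: "(- x + y) + (- x + y) = - (x + x) + (y + y)" by (simp add: algebra_simps)
  have neg: "- (0::2, 2::4) = (0, 2)" by (simp add: zero_prod_def)
  show ?thesis
    unfolding elem_order_eq_4_iff double_diff using double_cases[of x] double_cases[of y]
    by (elim disjE) (simp_all only: neg minus_zero add_0_left add_0_right, simp_all add: zero_prod_def)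
qed

lemma card_elem_order_4: "card {x::2 \<times> 4. elem_order x = 4} = 4"
proof -
  have "{x::2 \<times> 4. elem_order x = 4} = {(0, 1), (0, 3), (1, 1), (1, 3)}"
  proof (rule set_eqI)
    fix x :: "2 \<times> 4"
    obtain a b where "x = (a, b)" by fastforce
    then show "x \<in> {x. elem_order x = 4} \<longleftrightarrow> x \<in> {(0, 1), (0, 3), (1, 1), (1, 3)}"
      unfolding elem_order_eq_4_iff using exhaust_2[of a] exhaust_4[of b]
      by (auto simp: zero_prod_def)
  qed
  then show ?thesis by simp
qed

theorem proposition2:
  fixes \<theta>1 \<theta>2 :: "2 \<times> 4 \<Rightarrow> 2 \<times> 4"
  assumes "normalised_orthomorphism \<theta>1"
    and "normalised_orthomorphism \<theta>2"
    and "card (A44 \<theta>1 \<inter> A44 \<theta>2) = 2"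
  shows "\<not> orthogonal_orth \<theta>1 \<theta>2"
proof
  assume "orthogonal_orth \<theta>1 \<theta>2"
  define R where "R x \<longleftrightarrow> elem_order x = 4" for x :: "2 \<times> 4"
  have character: "R (- x + y) \<longleftrightarrow> R x \<noteq> R y" for x y
    unfolding R_def by (rule elem_order_4_diff_iff)
  have "card {x. R x \<noteq> R (\<theta>1 x)} = 4" "card {x. R x \<noteq> R (\<theta>2 x)} = 4"
       "card {x. R (\<theta>1 x) \<noteq> R (\<theta>2 x)} = 4"
    using assms(1,2) \<open>orthogonal_orth \<theta>1 \<theta>2\<close>
      card_disagree_eq_card[OF character, of "\<lambda>x. x"] card_disagree_eq_card[OF character]
    by (simp_all add: card_elem_order_4 R_def normalised_orthomorphism_def orthogonal_orth_def)
  then have "card {x. R x = R (\<theta>1 x) \<and> R (\<theta>1 x) = R (\<theta>2 x)} = 2"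
    using card_pairwise_disagree[of R "R \<circ> \<theta>1" "R \<circ> \<theta>2"] by simp
  moreover have "card (insert 0 (A44 \<theta>1 \<inter> A44 \<theta>2))
      \<le> card {x. R x = R (\<theta>1 x) \<and> R (\<theta>1 x) = R (\<theta>2 x)}"
    using assms(1,2) by (intro card_mono) (auto simp: A44_def R_def normalised_orthomorphism_def)
  moreover have "card (insert 0 (A44 \<theta>1 \<inter> A44 \<theta>2)) = 3"
    using assms(3) by (simp add: A44_def elem_order_eq_4_iff)
  ultimately show False by simp
qed

end
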